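(* There exist two fully-connected ReLU networks $F$ and $F'$ (with the same number $N$ of node maps and the same input dimension $n_0$) such that the set of sign sequences $\{s(C): C \text{ an } n_0\text{-dimensional cell of } \mathcal{C}(F)\}\subset\{-1,1\}^N$ equals the set $\{s(C'): C' \text{ an } n_0\text{-dimensional cell of } \mathcal{C}(F')\}$, but the polyhedral complexes $\mathcal{C}(F)$ and $\mathcal{C}(F')$ are not combinatorially equivalent (their face posets are not isomorphic).
   Context: A ReLU network of architecture $(n_0,\dots,n_m,1)$ is given by affine maps $A_i:\mathbb{R}^{n_{i-1}}\to\mathbb{R}^{n_i}$, $1\le i\le m+1$, $n_{m+1}=1$; $F_i=\mathrm{ReLU}\circ A_i$ ($i\le m$), $G=A_{m+1}$, $F=G\circ F_m\circ\cdots\circ F_1$, $F_{(k)}=F_k\circ\cdots\circ F_1$ ($F_{(0)}=\mathrm{id}$). Node maps: $F_{ij}=\pi_j\circ A_i\circ F_{(i-1)}:\mathbb{R}^{n_0}\to\mathbb{R}$, $1\le i\le m+1$, $1\le j\le n_i$; $N=n_1+\cdots+n_m+1$. $R^{(i)}$ is the polyhedral complex on $\mathbb{R}^{n_{i-1}}$ induced by the hyperplanes $\{\pi_jA_i=0\}$ (cells: nonempty intersections of one choice among $\{\pi_jA_i\ge0\},\{\pi_jA_i\le0\},\{\pi_jA_i=0\}$ for each $j$). Canonical polyhedral complex: $\mathcal{C}(F_{(1)})=R^{(1)}$, $\mathcal{C}(F_{(k)})=\{C\cap F_{(k-1)}^{-1}(R)\neq\emptyset: C\in\mathcal{C}(F_{(k-1)}),R\in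 R^{(k)}\}$ for $2\le k\le m+1$ (the arrangement of $G$ at the last step); $\mathcal{C}(F)$ is the last one. For a cell $C$, its sign sequence $s(C)\in\{-1,0,1\}^N$ has entries $s_{ij}(C)=\mathrm{sgn}(F_{ij}(x))$ for any $x$ in the relative interior of $C$ (this is well defined). On $n_0$-dimensional cells these sign sequences are the activation patterns, lying in $\{-1,1\}^N$. *)

theory Defs
  imports "HOL-Analysis.Analysis" "HOL-Library.Function_Algebras"
begin

text \<open>Points of R^n are modelled as functions nat => real that vanish at all
  coordinates >= n.  To use the library notions (affine hull, relative interior,
  faces, dimension) we equip nat => real with its pointwise real vector space
  structure (the topology is the product topology from HOL-Analysis).\<close>

instantiation "fun" :: (type, real_vector) real_vector
begin
definition scaleR_fun_def: "scaleR r f = (\<lambda>x. r *\<^sub>R f x)"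
instance by standard (auto simp: scaleR_fun_def fun_eq_iff algebra_simps)
end

type_synonym point = "nat \<Rightarrow> real"

definition ambient :: "nat \<Rightarrow> point set" where
  "ambient n = {x. \<forall>i\<ge>n. x i = 0}"

type_synonym layer = "(nat \<Rightarrow> nat \<Rightarrow> real) \<times> (nat \<Rightarrow> real)"

definition affine_app :: "layer \<Rightarrow> nat \<Rightarrow> nat \<Rightarrow> point \<Rightarrow> point" where
  "affine_app L nin nout x =
     (\<lambda>j. if j < nout then (\<Sum>k<nin. fst L j k * x k) + snd L j else 0)"

definition relu :: "point \<Rightarrow> point" where
  "relu x = (\<lambda>j. max 0 (x j))"

text \<open>A network: architecture ns = [n0, n1, ..., nm, 1] and layers
  Ls = [A1, ..., A(m+1)].\<close>
definition wf_net :: "nat list \<Rightarrow> layer list \<Rightarrow> bool" where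
  "wf_net ns Ls \<longleftrightarrow> length Ls \<ge> 1 \<and> length ns = length Ls + 1 \<and>
     last ns = 1 \<and> (\<forall>i<length ns. ns ! i \<ge> 1)"

fun Fpre :: "nat list \<Rightarrow> layer list \<Rightarrow> nat \<Rightarrow> point \<Rightarrow> point" where
  "Fpre ns Ls 0 x = x"
| "Fpre ns Ls (Suc k) x = relu (affine_app (Ls ! k) (ns ! k) (ns ! Suc k) (Fpre ns Ls k x))"

text \<open>Node map F_ij = pi_j o A_i o F_(i-1), for 1 <= i <= m+1 and 0 <= j < n_i
  (0-based index j).\<close>
definition node_map :: "nat list \<Rightarrow> layer list \<Rightarrow> nat \<Rightarrow> nat \<Rightarrow> point \<Rightarrow> real" where
  "node_map ns Ls i j x =
     affine_app (Ls ! (i - 1)) (ns ! (i - 1)) (ns ! i) (Fpre ns Ls (i - 1) x) j"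

text \<open>Cells of R^(i): nonempty sets of the form: for every j < n_i one of
  pi_j A_i >= 0, <= 0, = 0 (encoded by sigma j = 1, -1, 0), inside R^(n_(i-1)).\<close>
definition sign_cond :: "int \<Rightarrow> real \<Rightarrow> bool" where
  "sign_cond s t \<longleftrightarrow> (if s = 1 then t \<ge> 0 else if s = -1 then t \<le> 0 else t = 0)"

definition arrangement :: "nat list \<Rightarrow> layer list \<Rightarrow> nat \<Rightarrow> point set set" where
  "arrangement ns Ls i =
     {R. R \<noteq> {} \<and> (\<exists>\<sigma>::nat \<Rightarrow> int. (\<forall>j. \<sigma> j \<in> {-1, 0, 1}) \<and>
        R = {y \<in> ambient (ns ! (i - 1)).
               \<forall>j < ns ! i. sign_cond (\<sigma> j) (affine_app (Ls ! (i - 1)) (ns ! (i - 1)) (ns ! i) y j)})}"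

text \<open>Canonical polyhedral complex C(F_(k)).  canon 0 = {R^n0}, so canon 1 = R^(1),
  and canon (k+1) = {C \<inter> F_(k)^-1(R) nonempty : C in canon k, R in R^(k+1)}.\<close>
fun canon :: "nat list \<Rightarrow> layer list \<Rightarrow> nat \<Rightarrow> point set set" where
  "canon ns Ls 0 = {ambient (ns ! 0)}"
| "canon ns Ls (Suc k) =
     {D. D \<noteq> {} \<and> (\<exists>C \<in> canon ns Ls k. \<exists>R \<in> arrangement ns Ls (Suc k).
            D = C \<inter> (Fpre ns Ls k -` R))}"

definition canonical_complex :: "nat list \<Rightarrow> layer list \<Rightarrow> point set set" where
  "canonical_complex ns Ls = canon ns Ls (length Ls)"

definition cell_dim :: "point set \<Rightarrow> nat" where
  "cell_dim C = dim {x - y | x y. x \<in> C \<and> y \<in> C}"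

definition sign_seq :: "nat list \<Rightarrow> layer list \<Rightarrow> point set \<Rightarrow> real list" where
  "sign_seq ns Ls C =
     (let x = (SOME x. x \<in> rel_interior C) in
      concat (map (\<lambda>i. map (\<lambda>j. sgn (node_map ns Ls i j x)) [0..<ns ! i])
                  [1..<length Ls + 2]))"

definition comb_equiv :: "point set set \<Rightarrow> point set set \<Rightarrow> bool" where
  "comb_equiv P Q \<longleftrightarrow> (\<exists>f. bij_betw f P Q \<and>
     (\<forall>C\<in>P. \<forall>D\<in>P. C face_of D \<longleftrightarrow> f C face_of f D))"

end

theory Submission
  imports Defs
begin

(* Both networks have architecture (2, 3, 1, 1): the first layer computes x, y and -y, the
   second a single neuron z, and the output layer is constant, so it adds no cut. A cell is
   two-dimensional iff it has interior points, and then its sign sequence is the sign vector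
   of any interior point, at which no node vanishes. With z = max(0,x) - 1 and
   z = max(0,x) - |y|, the rescaling (x, y) -> (|y| x, y) multiplies z by |y|, so the two
   networks realize the same generic sign vectors. In the second complex every cell lies in
   a closed quadrant and contains the origin, so the vertex {0} is a face of every cell; the
   first complex has the two vertices (0,0) and (1,0), so none of its cells is a face of all
   cells, and a face-poset isomorphism cannot exist. *)

section \<open>Canonical complexes in terms of node maps\<close>

lemma Fpre_Suc_in_ambient: "Fpre ns Ls (Suc k) x \<in> ambient (ns ! Suc k)"
  by (simp add: ambient_def relu_def affine_app_def)

lemma Fpre_in_ambient: "x \<in> ambient (ns ! 0) \<Longrightarrow> Fpre ns Ls k x \<in> ambient (ns ! k)"
  by (cases k) (use Fpre_Suc_in_ambient in auto)

lemma canon_subset_ambient: "C \<in> canon ns Ls k \<Longrightarrow> C \<subseteq> ambient (ns ! 0)"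
  by (induction k arbitrary: C) auto

lemma Int_vimage_Fpre_arrangement_cell:
  assumes "C \<in> canon ns Ls k"
  shows "C \<inter> Fpre ns Ls k -` {y \<in> ambient (ns ! k). \<forall>j < ns ! Suc k.
        sign_cond (\<sigma> j) (affine_app (Ls ! k) (ns ! k) (ns ! Suc k) y j)}
    = C \<inter> {x. \<forall>j < ns ! Suc k. sign_cond (\<sigma> j) (node_map ns Ls (Suc k) j x)}"
proof -
  have "Fpre ns Ls k x \<in> ambient (ns ! k)" if "x \<in> C" for x
    using Fpre_in_ambient canon_subset_ambient [OF assms] that by blast
  moreover have "node_map ns Ls (Suc k) j x = affine_app (Ls ! k) (ns ! k) (ns ! Suc k) (Fpre ns Ls k x) j" for j x
    by (simp add: node_map_def del: Fpre.simps)
  ultimately show ?thesis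
    by (auto simp del: Fpre.simps)
qed

lemma canon_Suc_node_map:
  "canon ns Ls (Suc k) =
     {D. D \<noteq> {} \<and> (\<exists>C \<in> canon ns Ls k. \<exists>\<sigma>. (\<forall>j. \<sigma> j \<in> {-1, 0, 1}) \<and>
        D = C \<inter> {x. \<forall>j < ns ! Suc k. sign_cond (\<sigma> j) (node_map ns Ls (Suc k) j x)})}"
  (is "_ = ?rhs")
proof (intro set_eqI iffI)
  fix D assume "D \<in> canon ns Ls (Suc k)"
  then obtain C R where D: "D \<noteq> {}" "C \<in> canon ns Ls k" "R \<in> arrangement ns Ls (Suc k)"
    "D = C \<inter> Fpre ns Ls k -` R"
    by (auto simp del: Fpre.simps)
  obtain \<sigma> where \<sigma>: "\<forall>j. \<sigma> j \<in> {-1, 0, 1}" "R = {y \<in> ambient (ns ! k). \<forall>j < ns ! Suc k.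
      sign_cond (\<sigma> j) (affine_app (Ls ! k) (ns ! k) (ns ! Suc k) y j)}"
    using D(3) unfolding arrangement_def mem_Collect_eq diff_Suc_1 by blast
  have "D = C \<inter> {x. \<forall>j < ns ! Suc k. sign_cond (\<sigma> j) (node_map ns Ls (Suc k) j x)}"
    unfolding D(4) \<sigma>(2) Int_vimage_Fpre_arrangement_cell [OF D(2)] ..
  then show "D \<in> ?rhs"
    using D(1,2) \<sigma>(1) by blast
next
  fix D assume "D \<in> ?rhs"
  then obtain C \<sigma> where D: "D \<noteq> {}" "C \<in> canon ns Ls k" "\<forall>j. \<sigma> j \<in> {-1, 0, 1}"
    "D = C \<inter> {x. \<forall>j < ns ! Suc k. sign_cond (\<sigma> j) (node_map ns Ls (Suc k) j x)}"
    by blast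
  define R where "R = {y \<in> ambient (ns ! k). \<forall>j < ns ! Suc k.
      sign_cond (\<sigma> j) (affine_app (Ls ! k) (ns ! k) (ns ! Suc k) y j)}"
  have "D = C \<inter> Fpre ns Ls k -` R"
    unfolding R_def Int_vimage_Fpre_arrangement_cell [OF D(2)] D(4) ..
  moreover have "R \<in> arrangement ns Ls (Suc k)"
    using D(1,3) calculation unfolding arrangement_def R_def by auto
  ultimately show "D \<in> canon ns Ls (Suc k)"
    using D(1,2) by (auto simp del: Fpre.simps)
qed

section \<open>The plane inside nat \<Rightarrow> real\<close>

(* Dimensions and interiors are computed in the Euclidean space real \<times> real,
   which plane identifies with ambient 2. *)

definition plane :: "real \<times> real \<Rightarrow> point" where
  "plane z = (\<lambda>i. if i = 0 then fst z else if i = 1 then snd z else 0)"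

definition plane_coords :: "point \<Rightarrow> real \<times> real" where
  "plane_coords p = (p 0, p 1)"

lemma plane_apply [simp]: "plane z 0 = fst z" "plane z (Suc 0) = snd z"
  by (simp_all add: plane_def)

lemma plane_coords_plane [simp]: "plane_coords (plane z) = z"
  by (simp add: plane_coords_def)

lemma plane_in_ambient: "plane z \<in> ambient 2"
  by (simp add: plane_def ambient_def)

lemma plane_plane_coords: "p \<in> ambient 2 \<Longrightarrow> plane (plane_coords p) = p"
  by (auto simp: plane_def plane_coords_def ambient_def fun_eq_iff)

lemma plane_image_Collect: "plane ` {z. P z} = {p \<in> ambient 2. P (plane_coords p)}"
  using plane_plane_coords by (force simp: plane_in_ambient)

lemma inj_plane: "inj plane"
  by (metis injI plane_coords_plane)

lemma linear_plane: "linear plane"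
  by (rule linearI) (auto simp: plane_def fun_eq_iff plus_fun_def scaleR_fun_def)

lemma continuous_on_plane: "continuous_on UNIV plane"
proof (rule continuous_on_coordinatewise_then_product)
  fix i :: nat
  show "continuous_on UNIV (\<lambda>z. plane z i)"
    by (cases "i = 0"; cases "i = 1") (auto simp: plane_def intro!: continuous_intros)
qed

lemma continuous_on_plane_coords: "continuous_on UNIV plane_coords"
  unfolding plane_coords_def by (auto intro!: continuous_intros)

lemma linear_image_affine_hull:
  assumes "linear f"
  shows "f ` (affine hull S) = affine hull (f ` S)"
proof
  interpret f: linear f by fact
  have "affine (f -` (affine hull (f ` S)))"
    unfolding affine_def [of "f -` _"] by (simp add: f.add f.scaleR mem_affine)
  then have "affine hull S \<subseteq> f -` (affine hull (f ` S))"
    by (rule hull_minimal [rotated]) (auto intro: hull_inc)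
  then show "f ` (affine hull S) \<subseteq> affine hull (f ` S)"
    by blast
  have "affine (f ` (affine hull S))"
    unfolding affine_def [of "f ` _"] by (auto simp: f.add [symmetric] f.scaleR [symmetric] mem_affine)
  then show "affine hull (f ` S) \<subseteq> f ` (affine hull S)"
    by (rule hull_minimal [rotated]) (auto intro: hull_inc)
qed

lemma rel_interior_plane_image: "rel_interior (plane ` S) = plane ` rel_interior S"
proof -
  have hull_eq: "affine hull (plane ` S) = plane ` (affine hull S)"
    using linear_image_affine_hull [OF linear_plane] by simp
  show ?thesis
  proof (intro antisym subsetI)
    fix p assume "p \<in> rel_interior (plane ` S)"
    then obtain T where T: "open T" "p \<in> T \<inter> plane ` S" "T \<inter> affine hull (plane ` S) \<subseteq> plane ` S"
      by (auto simp only: mem_rel_interior)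
    have "plane_coords p \<in> rel_interior S"
      unfolding mem_rel_interior
    proof (intro exI conjI)
      show "open (plane -` T)"
        using continuous_on_plane T(1) by (simp add: continuous_on_open_vimage)
      show "plane_coords p \<in> plane -` T \<inter> S"
        using T(2) by auto
      show "plane -` T \<inter> affine hull S \<subseteq> S"
        using T(3) inj_plane unfolding hull_eq by (auto dest: injD)
    qed
    then show "p \<in> plane ` rel_interior S"
      using T(2) by force
  next
    fix p assume "p \<in> plane ` rel_interior S"
    then obtain z where z: "p = plane z" "z \<in> rel_interior S"
      by blast
    then obtain T where T: "open T" "z \<in> T \<inter> S" "T \<inter> affine hull S \<subseteq> S"
      by (auto simp only: mem_rel_interior)
    show "p \<in> rel_interior (plane ` S)"
      unfolding mem_rel_interior
    proof (intro exI conjI)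
      show "open (plane_coords -` T)"
        using continuous_on_plane_coords T(1) by (simp add: continuous_on_open_vimage)
      show "p \<in> plane_coords -` T \<inter> plane ` S"
        using z T(2) by auto
      show "plane_coords -` T \<inter> affine hull (plane ` S) \<subseteq> plane ` S"
        using T(3) unfolding hull_eq by auto
    qed
  qed
qed

lemma dim_differences_eq_aff_dim:
  fixes S :: "'a::euclidean_space set"
  assumes "a \<in> S"
  shows "int (dim {x - y | x y. x \<in> S \<and> y \<in> S}) = aff_dim S"
proof -
  have "span {x - y | x y. x \<in> S \<and> y \<in> S} = span ((\<lambda>x. x - a) ` S)"
    unfolding span_eq
  proof
    show "{x - y | x y. x \<in> S \<and> y \<in> S} \<subseteq> span ((\<lambda>x. x - a) ` S)"
    proof clarify
      fix x y assume "x \<in> S" "y \<in> S"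
      then have "(x - a) - (y - a) \<in> span ((\<lambda>x. x - a) ` S)"
        by (intro span_diff span_base) auto
      then show "x - y \<in> span ((\<lambda>x. x - a) ` S)" by simp
    qed
    show "(\<lambda>x. x - a) ` S \<subseteq> span {x - y | x y. x \<in> S \<and> y \<in> S}"
    proof (rule image_subsetI)
      fix x assume "x \<in> S"
      then have "x - a \<in> {x - y | x y. x \<in> S \<and> y \<in> S}"
        using assms by blast
      then show "x - a \<in> span {x - y | x y. x \<in> S \<and> y \<in> S}"
        by (rule span_base)
    qed
  qed
  then have "dim {x - y | x y. x \<in> S \<and> y \<in> S} = dim ((\<lambda>x. x - a) ` S)"
    using dim_span [of "{x - y | x y. x \<in> S \<and> y \<in> S}"] dim_span [of "(\<lambda>x. x - a) ` S"]
    by simp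
  then show ?thesis
    using aff_dim_eq_dim_subtract[of a S] assms by (simp add: hull_inc)
qed

lemma linear_image_differences:
  assumes "linear f"
  shows "{x - y | x y. x \<in> f ` S \<and> y \<in> f ` S} = f ` {x - y | x y. x \<in> S \<and> y \<in> S}"
proof (intro equalityI subsetI)
  fix d assume "d \<in> {x - y | x y. x \<in> f ` S \<and> y \<in> f ` S}"
  then obtain x y where "x \<in> S" "y \<in> S" "d = f x - f y"
    by blast
  then show "d \<in> f ` {x - y | x y. x \<in> S \<and> y \<in> S}"
    by (auto simp: linear_diff [OF assms, symmetric])
next
  fix d assume "d \<in> f ` {x - y | x y. x \<in> S \<and> y \<in> S}"
  then obtain x y where "x \<in> S" "y \<in> S" "d = f (x - y)"
    by blast
  then show "d \<in> {x - y | x y. x \<in> f ` S \<and> y \<in> f ` S}"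
    by (auto simp: linear_diff [OF assms])
qed

lemma cell_dim_plane_image: "cell_dim (plane ` S) = dim {x - y | x y. x \<in> S \<and> y \<in> S}"
  unfolding cell_dim_def linear_image_differences [OF linear_plane]
  using inj_plane by (simp add: eucl.dim_image_eq [OF linear_plane] inj_on_subset)

lemma cell_dim_plane_image_eq_2_iff:
  assumes "convex S"
  shows "cell_dim (plane ` S) = 2 \<longleftrightarrow> interior S \<noteq> {}"
proof (cases "S = {}")
  case True
  then show ?thesis using cell_dim_plane_image [of S] by simp
next
  case False
  then have "cell_dim (plane ` S) = 2 \<longleftrightarrow> aff_dim S = int DIM(real \<times> real)"
    using cell_dim_plane_image dim_differences_eq_aff_dim by fastforce
  also have "\<dots> \<longleftrightarrow> interior S \<noteq> {}"
    using False assms rel_interior_eq_empty interior_rel_interior_gen[of S] by fastforce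
  finally show ?thesis .
qed

section \<open>Cells of a network with a single hidden neuron\<close>

lemma sign_cond_zero [simp]: "sign_cond s 0"
  by (simp add: sign_cond_def)

lemma sign_cond_mult_nonneg: "sign_cond s p \<Longrightarrow> sign_cond s q \<Longrightarrow> 0 \<le> p * q"
  by (auto simp: sign_cond_def split: if_splits intro: mult_nonneg_nonneg mult_nonpos_nonpos)

lemma sign_cond_opposite: "sign_cond s t \<Longrightarrow> sign_cond s (- t) \<Longrightarrow> t = 0"
  by (auto simp: sign_cond_def split: if_splits)

lemma sign_cond_opposite_strict: "sign_cond s p \<Longrightarrow> sign_cond s q \<Longrightarrow> p < 0 \<Longrightarrow> 0 < q \<Longrightarrow> False"
  using sign_cond_mult_nonneg [of s p q] mult_neg_pos [of p q] by linarith

lemma sign_cond_sgn_eq: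
  "sign_cond s p \<Longrightarrow> sign_cond s q \<Longrightarrow> p \<noteq> 0 \<Longrightarrow> q \<noteq> 0 \<Longrightarrow> sgn p = sgn q"
  using sign_cond_mult_nonneg [of s p q] by (auto simp: sgn_if zero_le_mult_iff)

lemma sign_cond_convex:
  assumes "sign_cond s p" "sign_cond s q" "0 \<le> u" "0 \<le> v"
  shows "sign_cond s (u * p + v * q)"
proof -
  consider "s = 1" "0 \<le> p" "0 \<le> q" | "s = -1" "p \<le> 0" "q \<le> 0" | "s \<noteq> 1" "s \<noteq> -1" "p = 0" "q = 0"
    using assms(1,2) unfolding sign_cond_def by (auto split: if_splits)
  then show ?thesis
  proof cases
    case 1
    then show ?thesis using assms(3,4) by (simp add: sign_cond_def)
  next
    case 2
    then show ?thesis
      using assms(3,4) mult_nonneg_nonpos [of u p] mult_nonneg_nonpos [of v q] by (simp add: sign_cond_def)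
  next
    case 3
    then show ?thesis by (simp add: sign_cond_def)
  qed
qed

lemma sign_cond_of_same_sign:
  assumes "r \<noteq> 0"
  obtains s where "s \<in> {-1, 0, 1}" "\<And>t. 0 < r * t \<Longrightarrow> sign_cond s t"
proof (cases "0 < r")
  case True
  show ?thesis
    by (rule that [of 1]) (use True in \<open>auto simp: sign_cond_def zero_less_mult_iff\<close>)
next
  case False
  show ?thesis
    by (rule that [of "-1"]) (use False assms in \<open>auto simp: sign_cond_def zero_less_mult_iff\<close>)
qed

lemma max_0_convex_combination:
  fixes p q u v :: real
  assumes "0 \<le> p * q" "0 \<le> u" "0 \<le> v"
  shows "max 0 (u * p + v * q) = u * max 0 p + v * max 0 q"
proof (cases "0 \<le> p \<and> 0 \<le> q")
  case True
  then show ?thesis using assms(2,3) by simp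
next
  case False
  then have "p \<le> 0" "q \<le> 0"
    using assms(1) by (auto simp: zero_le_mult_iff)
  then show ?thesis
    using assms(2,3) mult_nonneg_nonpos [of u p] mult_nonneg_nonpos [of v q] by (simp add: max_def)
qed

definition hidden :: "layer \<Rightarrow> real \<times> real \<Rightarrow> real" where
  "hidden L z = fst L 0 0 * max 0 (fst z) + fst L 0 1 * max 0 (snd z) + fst L 0 2 * max 0 (- snd z) + snd L 0"

definition cell :: "layer \<Rightarrow> int \<Rightarrow> int \<Rightarrow> int \<Rightarrow> int \<Rightarrow> (real \<times> real) set" where
  "cell L a b c d = {z. sign_cond a (fst z) \<and> sign_cond b (snd z) \<and> sign_cond c (- snd z) \<and>
     sign_cond d (hidden L z)}"

definition generic :: "layer \<Rightarrow> real \<times> real \<Rightarrow> bool" where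
  "generic L z \<longleftrightarrow> fst z \<noteq> 0 \<and> snd z \<noteq> 0 \<and> hidden L z \<noteq> 0"

(* Off the axes the hidden neuron changes sign across each of its zeros, so no zero
   lies in the interior of a cell. *)
definition sign_change_at_zeros :: "layer \<Rightarrow> bool" where
  "sign_change_at_zeros L \<longleftrightarrow> (\<forall>x y h. 0 < h \<longrightarrow> x \<noteq> 0 \<longrightarrow> y \<noteq> 0 \<longrightarrow> hidden L (x, y) = 0 \<longrightarrow>
     hidden L (x - h, y) < 0 \<and> 0 < hidden L (x + h, y))"

lemma continuous_on_hidden: "continuous_on UNIV (hidden L)"
  unfolding hidden_def by (intro continuous_intros)

lemma hidden_convex_combination:
  assumes "z \<in> cell L a b c d" "w \<in> cell L a b c d" "0 \<le> u" "0 \<le> v" "u + v = 1"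
  shows "hidden L (u *\<^sub>R z + v *\<^sub>R w) = u * hidden L z + v * hidden L w"
proof -
  have "0 \<le> fst z * fst w" "0 \<le> snd z * snd w" "0 \<le> (- snd z) * (- snd w)"
    using assms(1,2) by (auto simp: cell_def intro: sign_cond_mult_nonneg)
  then have max_eqs:
    "max 0 (fst (u *\<^sub>R z + v *\<^sub>R w)) = u * max 0 (fst z) + v * max 0 (fst w)"
    "max 0 (snd (u *\<^sub>R z + v *\<^sub>R w)) = u * max 0 (snd z) + v * max 0 (snd w)"
    "max 0 (- snd (u *\<^sub>R z + v *\<^sub>R w)) = u * max 0 (- snd z) + v * max 0 (- snd w)"
    using assms(3,4) max_0_convex_combination [of "- snd z" "- snd w" u v]
    by (simp_all add: max_0_convex_combination)
  have "hidden L (u *\<^sub>R z + v *\<^sub>R w) =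
      fst L 0 0 * (u * max 0 (fst z) + v * max 0 (fst w)) +
      fst L 0 1 * (u * max 0 (snd z) + v * max 0 (snd w)) +
      fst L 0 2 * (u * max 0 (- snd z) + v * max 0 (- snd w)) + (u + v) * snd L 0"
    unfolding hidden_def max_eqs assms(5) by simp
  also have "\<dots> = u * hidden L z + v * hidden L w"
    unfolding hidden_def by (simp add: algebra_simps)
  finally show ?thesis .
qed

lemma convex_cell: "convex (cell L a b c d)"
proof (rule convexI)
  fix z w and u v :: real
  assume zw: "z \<in> cell L a b c d" "w \<in> cell L a b c d" and uv: "0 \<le> u" "0 \<le> v" "u + v = 1"
  have "sign_cond a (u * fst z + v * fst w) \<and> sign_cond b (u * snd z + v * snd w) \<and>
      sign_cond c (u * (- snd z) + v * (- snd w)) \<and> sign_cond d (u * hidden L z + v * hidden L w)"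
    by (intro conjI sign_cond_convex) (use zw uv in \<open>auto simp: cell_def\<close>)
  then show "u *\<^sub>R z + v *\<^sub>R w \<in> cell L a b c d"
    using hidden_convex_combination [OF zw uv] by (simp add: cell_def algebra_simps)
qed

lemma interior_cell_generic:
  assumes "sign_change_at_zeros L" "z \<in> interior (cell L a b c d)"
  shows "generic L z"
proof -
  obtain x y where z: "z = (x, y)"
    by (cases z)
  obtain e where e: "0 < e" "ball z e \<subseteq> cell L a b c d"
    using assms(2) by (meson mem_interior)
  have horizontal: "(x + s, y) \<in> cell L a b c d" if "\<bar>s\<bar> < e" for s
    using e(2) that by (auto simp: z dist_Pair_Pair dist_real_def)
  have vertical: "(x, y + t) \<in> cell L a b c d" if "\<bar>t\<bar> < e" for t
    using e(2) that by (auto simp: z dist_Pair_Pair dist_real_def)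
  define h where "h = e / 2"
  have h: "0 < h" "\<bar>h\<bar> < e" "\<bar>- h\<bar> < e"
    using e(1) by (auto simp: h_def)
  have "x \<noteq> 0"
  proof
    assume "x = 0"
    then have "sign_cond a h" "sign_cond a (- h)"
      using horizontal [OF h(2)] horizontal [OF h(3)] by (auto simp: cell_def)
    then show False
      using sign_cond_opposite h(1) by fastforce
  qed
  moreover have "y \<noteq> 0"
  proof
    assume "y = 0"
    then have "sign_cond b h" "sign_cond b (- h)"
      using vertical [OF h(2)] vertical [OF h(3)] by (auto simp: cell_def)
    then show False
      using sign_cond_opposite h(1) by fastforce
  qed
  moreover have "hidden L (x, y) \<noteq> 0"
  proof
    assume "hidden L (x, y) = 0"
    then have "hidden L (x + - h, y) < 0" "0 < hidden L (x + h, y)"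
      using assms(1) h(1) \<open>x \<noteq> 0\<close> \<open>y \<noteq> 0\<close> unfolding sign_change_at_zeros_def by auto
    moreover have "sign_cond d (hidden L (x + - h, y))" "sign_cond d (hidden L (x + h, y))"
      using horizontal [OF h(3)] horizontal [OF h(2)] by (auto simp: cell_def)
    ultimately show False
      by (blast intro: sign_cond_opposite_strict)
  qed
  ultimately show ?thesis
    by (simp add: z generic_def)
qed

lemma generic_in_interior_cell:
  assumes "generic L z"
  obtains a b c d where "{a, b, c, d} \<subseteq> {-1, 0, 1}" "z \<in> interior (cell L a b c d)"
proof -
  have nonzero: "fst z \<noteq> 0" "snd z \<noteq> 0" "- snd z \<noteq> 0" "hidden L z \<noteq> 0"
    using assms by (simp_all add: generic_def)
  obtain a where a: "a \<in> {-1, 0, 1}" "\<And>t. 0 < fst z * t \<Longrightarrow> sign_cond a t"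
    using nonzero(1) by (rule sign_cond_of_same_sign) blast
  obtain b where b: "b \<in> {-1, 0, 1}" "\<And>t. 0 < snd z * t \<Longrightarrow> sign_cond b t"
    using nonzero(2) by (rule sign_cond_of_same_sign) blast
  obtain c where c: "c \<in> {-1, 0, 1}" "\<And>t. 0 < - snd z * t \<Longrightarrow> sign_cond c t"
    using nonzero(3) by (rule sign_cond_of_same_sign) blast
  obtain d where d: "d \<in> {-1, 0, 1}" "\<And>t. 0 < hidden L z * t \<Longrightarrow> sign_cond d t"
    using nonzero(4) by (rule sign_cond_of_same_sign) blast
  define U where "U = {w. 0 < fst z * fst w \<and> 0 < snd z * snd w \<and> 0 < hidden L z * hidden L w}"
  have "open U"
    unfolding U_def by (intro open_Collect_conj open_Collect_less continuous_intros continuous_on_hidden)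
  moreover have "z \<in> U"
    using assms by (auto simp: U_def generic_def zero_less_mult_iff)
  moreover have "U \<subseteq> cell L a b c d"
    by (auto simp: U_def cell_def intro: a(2) b(2) c(2) d(2))
  ultimately have "z \<in> interior (cell L a b c d)"
    by (rule interiorI)
  then show ?thesis
    using a(1) b(1) c(1) d(1) that by simp
qed

section \<open>The architecture (2, 3, 1, 1)\<close>

definition first_layer :: layer where
  "first_layer = (\<lambda>j k. if j = 0 \<and> k = 0 then 1 else if j = 1 \<and> k = 1 then 1
     else if j = 2 \<and> k = 1 then -1 else 0, \<lambda>j. 0)"

definition output_layer :: layer where
  "output_layer = (\<lambda>j k. 0, \<lambda>j. -1)"

definition arch :: "nat list" where
  "arch = [2, 3, 1, 1]"

definition net :: "layer \<Rightarrow> layer list" where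
  "net L = [first_layer, L, output_layer]"

(* sign_seq also lists a layer past the output layer, built from out-of-range list
   entries. As the output layer is constant, Fpre arch (net L) 3 vanishes and these
   unspecified entries are the same for every hidden layer L. *)
definition beyond_output_signs :: "real list" where
  "beyond_output_signs = map (\<lambda>j. sgn (affine_app (([] :: layer list) ! 0) 1 (([] :: nat list) ! 0) (\<lambda>i. 0) j))
     [0..<([] :: nat list) ! 0]"

definition sign_pattern :: "layer \<Rightarrow> real \<times> real \<Rightarrow> real list" where
  "sign_pattern L z = [sgn (fst z), sgn (snd z), sgn (- snd z), sgn (hidden L z), -1] @ beyond_output_signs"

lemma wf_net_arch: "wf_net arch (net L)"
  by (auto simp: wf_net_def arch_def net_def less_Suc_eq nth_Cons')

lemma arch_nth [simp]:
  "arch ! 0 = 2" "arch ! Suc 0 = 3" "arch ! 2 = 1" "arch ! 3 = 1" "arch ! 4 = ([] :: nat list) ! 0"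
  by (simp_all add: arch_def numeral_3_eq_3 numeral_Bit0)

lemma Fpre_net_1:
  "Fpre arch (net L) 1 x = (\<lambda>j. if j = 0 then max 0 (x 0) else if j = 1 then max 0 (x 1)
     else if j = 2 then max 0 (- x 1) else 0)"
  by (auto simp: arch_def net_def first_layer_def relu_def affine_app_def fun_eq_iff
      numeral_2_eq_2 numeral_3_eq_3)

lemma Fpre_net_3: "Fpre arch (net L) 3 x = (\<lambda>j. 0)"
  by (simp add: numeral_3_eq_3 arch_def net_def output_layer_def relu_def affine_app_def fun_eq_iff)

lemma node_map_net_1:
  "node_map arch (net L) 1 j x = (if j = 0 then x 0 else if j = 1 then x 1 else if j = 2 then - x 1 else 0)"
  by (auto simp: node_map_def arch_def net_def first_layer_def affine_app_def numeral_2_eq_2 numeral_3_eq_3)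

lemma node_map_net_2: "node_map arch (net L) 2 0 x = hidden L (plane_coords x)"
proof -
  have "node_map arch (net L) 2 0 x = affine_app L 3 1 (Fpre arch (net L) 1 x) 0"
    by (simp add: node_map_def net_def del: Fpre.simps)
  then show ?thesis
    unfolding Fpre_net_1 by (simp add: affine_app_def hidden_def plane_coords_def numeral_3_eq_3 numeral_2_eq_2)
qed

lemma node_map_net_3: "node_map arch (net L) 3 0 x = -1"
  by (simp add: node_map_def net_def affine_app_def output_layer_def)

lemma node_map_net_beyond:
  "node_map arch (net L) 4 j x = affine_app (([] :: layer list) ! 0) 1 (([] :: nat list) ! 0) (\<lambda>i. 0) j"
proof -
  have "node_map arch (net L) 4 j x = affine_app (net L ! 3) (arch ! 3) (arch ! 4) (Fpre arch (net L) 3 x) j"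
    by (simp add: node_map_def del: Fpre.simps)
  then show ?thesis
    unfolding Fpre_net_3 by (simp add: arch_def net_def numeral_3_eq_3 numeral_Bit0)
qed

lemma sign_seq_net: "sign_seq arch (net L) C = sign_pattern L (plane_coords (SOME x. x \<in> rel_interior C))"
proof -
  have layers: "[1..<length (net L) + 2] = [1, 2, 3, 4]"
    by (simp add: net_def upt_rec)
  have "[0..<3] = [0, 1, 2 :: nat]" "[0..<1] = [0 :: nat]"
    by (simp_all add: upt_rec)
  then show ?thesis
    unfolding sign_seq_def Let_def layers
    by (simp add: node_map_net_1 [unfolded One_nat_def] node_map_net_2 node_map_net_3 node_map_net_beyond
        sign_pattern_def beyond_output_signs_def plane_coords_def del: Fpre.simps)
qed

lemma plane_image_cell:
  "plane ` cell L a b c d = {x \<in> ambient 2. sign_cond a (x 0) \<and> sign_cond b (x 1) \<and>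
     sign_cond c (- x 1) \<and> sign_cond d (hidden L (plane_coords x))}"
  unfolding cell_def plane_image_Collect by (simp add: plane_coords_def)

lemma canon_net_1:
  "canon arch (net L) 1 = {C. C \<noteq> {} \<and> (\<exists>\<sigma> :: nat \<Rightarrow> int. (\<forall>j. \<sigma> j \<in> {-1, 0, 1}) \<and>
     C = {x \<in> ambient 2. sign_cond (\<sigma> 0) (x 0) \<and> sign_cond (\<sigma> 1) (x 1) \<and> sign_cond (\<sigma> 2) (- x 1)})}"
proof -
  have "(\<forall>j<3. sign_cond ((\<sigma> :: nat \<Rightarrow> int) j) (node_map arch (net L) (Suc 0) j x)) \<longleftrightarrow>
      sign_cond (\<sigma> 0) (x 0) \<and> sign_cond (\<sigma> 1) (x 1) \<and> sign_cond (\<sigma> 2) (- x 1)" for \<sigma> x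
    by (auto simp: node_map_net_1 [unfolded One_nat_def] numeral_3_eq_3 numeral_2_eq_2 less_Suc_eq)
  then show ?thesis
    using canon_Suc_node_map [of arch "net L" 0] by auto
qed

lemma canon_net_2_node_map:
  "canon arch (net L) 2 = {D. D \<noteq> {} \<and> (\<exists>C \<in> canon arch (net L) 1. \<exists>\<tau> :: nat \<Rightarrow> int.
     (\<forall>j. \<tau> j \<in> {-1, 0, 1}) \<and> D = C \<inter> {x. sign_cond (\<tau> 0) (hidden L (plane_coords x))})}"
  unfolding canon_Suc_node_map [of arch "net L" 1, unfolded Suc_1]
  by (simp add: node_map_net_2 del: canon.simps)

lemma canon_net_2:
  "canon arch (net L) 2 =
     {C. C \<noteq> {} \<and> (\<exists>a b c d. {a, b, c, d} \<subseteq> {-1, 0, 1} \<and> C = plane ` cell L a b c d)}"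
  (is "_ = ?cells")
proof (intro set_eqI iffI)
  fix D assume "D \<in> canon arch (net L) 2"
  then obtain C \<tau> where D: "D \<noteq> {}" "C \<in> canon arch (net L) 1" "\<forall>j. \<tau> j \<in> {-1, 0, 1}"
    "D = C \<inter> {x. sign_cond (\<tau> 0) (hidden L (plane_coords x))}"
    unfolding canon_net_2_node_map mem_Collect_eq by meson
  obtain \<sigma> :: "nat \<Rightarrow> int" where \<sigma>: "\<forall>j. \<sigma> j \<in> {-1, 0, 1}"
    "C = {x \<in> ambient 2. sign_cond (\<sigma> 0) (x 0) \<and> sign_cond (\<sigma> 1) (x 1) \<and> sign_cond (\<sigma> 2) (- x 1)}"
    using D(2) unfolding canon_net_1 by blast
  have "{\<sigma> 0, \<sigma> 1, \<sigma> 2, \<tau> 0} \<subseteq> {-1, 0, 1}"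
    using \<sigma>(1) D(3) by auto
  moreover have "D = plane ` cell L (\<sigma> 0) (\<sigma> 1) (\<sigma> 2) (\<tau> 0)"
    unfolding D(4) \<sigma>(2) plane_image_cell by auto
  ultimately show "D \<in> ?cells"
    using D(1) by blast
next
  fix D assume "D \<in> ?cells"
  then obtain a b c d where D: "D \<noteq> {}" "{a, b, c, d} \<subseteq> {-1, 0, 1}" "D = plane ` cell L a b c d"
    by blast
  define C where "C = {x \<in> ambient 2. sign_cond a (x 0) \<and> sign_cond b (x 1) \<and> sign_cond c (- x 1)}"
  show "D \<in> canon arch (net L) 2"
    unfolding canon_net_2_node_map mem_Collect_eq
  proof (intro conjI bexI exI)
    show "D \<noteq> {}"
      by (fact D(1))
    show "\<forall>j. (\<lambda>j. d) j \<in> {-1, 0, 1}"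
      using D(2) by simp
    show "D = C \<inter> {x. sign_cond ((\<lambda>j. d) 0) (hidden L (plane_coords x))}"
      unfolding D(3) plane_image_cell C_def by auto
    show "C \<in> canon arch (net L) 1"
      unfolding canon_net_1 mem_Collect_eq
    proof (intro conjI exI)
      show "C \<noteq> {}"
        using D(1,3) by (auto simp: C_def plane_image_cell)
      show "\<forall>j. (\<lambda>j. if j = 0 then a else if j = 1 then b else c) j \<in> {-1, 0, 1}"
        using D(2) by auto
    qed (simp add: C_def)
  qed
qed

lemma canonical_complex_net:
  "canonical_complex arch (net L) =
     {C. C \<noteq> {} \<and> (\<exists>a b c d. {a, b, c, d} \<subseteq> {-1, 0, 1} \<and> C = plane ` cell L a b c d)}"
proof -
  have "canonical_complex arch (net L) = canon arch (net L) (Suc 2)"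
    by (simp add: canonical_complex_def net_def numeral_3_eq_3 del: canon.simps)
  also have "\<dots> = {D. D \<noteq> {} \<and> (\<exists>C \<in> canon arch (net L) 2. \<exists>\<rho> :: nat \<Rightarrow> int. (\<forall>j. \<rho> j \<in> {-1, 0, 1}) \<and>
      D = C \<inter> {x. \<forall>j < arch ! Suc 2. sign_cond (\<rho> j) (node_map arch (net L) (Suc 2) j x)})}"
    by (rule canon_Suc_node_map)
  also have "\<dots> = canon arch (net L) 2"
  proof (intro set_eqI iffI)
    fix D assume "D \<in> {D. D \<noteq> {} \<and> (\<exists>C \<in> canon arch (net L) 2. \<exists>\<rho> :: nat \<Rightarrow> int. (\<forall>j. \<rho> j \<in> {-1, 0, 1}) \<and>
      D = C \<inter> {x. \<forall>j < arch ! Suc 2. sign_cond (\<rho> j) (node_map arch (net L) (Suc 2) j x)})}"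
    then obtain C \<rho> where D: "D \<noteq> {}" "C \<in> canon arch (net L) 2"
      "D = C \<inter> {x. \<forall>j < arch ! Suc 2. sign_cond (\<rho> j) (node_map arch (net L) (Suc 2) j x)}"
      by blast
    then have "D = C"
      by (auto simp: node_map_net_3)
    then show "D \<in> canon arch (net L) 2"
      using D(2) by simp
  next
    fix D assume D: "D \<in> canon arch (net L) 2"
    show "D \<in> {D. D \<noteq> {} \<and> (\<exists>C \<in> canon arch (net L) 2. \<exists>\<rho> :: nat \<Rightarrow> int. (\<forall>j. \<rho> j \<in> {-1, 0, 1}) \<and>
      D = C \<inter> {x. \<forall>j < arch ! Suc 2. sign_cond (\<rho> j) (node_map arch (net L) (Suc 2) j x)})}"
      unfolding mem_Collect_eq
    proof (intro conjI bexI exI)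
      show "D \<noteq> {}"
        using D unfolding canon_net_2 by blast
      show "D = D \<inter> {x. \<forall>j < arch ! Suc 2. sign_cond ((\<lambda>j. -1) j) (node_map arch (net L) (Suc 2) j x)}"
        by (simp add: node_map_net_3 sign_cond_def)
    qed (use D in simp_all)
  qed
  finally show ?thesis
    unfolding canon_net_2 .
qed

lemma plane_image_cell_in_canonical_complex:
  assumes "{a, b, c, d} \<subseteq> {-1, 0, 1}" "cell L a b c d \<noteq> {}"
  shows "plane ` cell L a b c d \<in> canonical_complex arch (net L)"
proof -
  have "\<exists>a' b' c' d'. {a', b', c', d'} \<subseteq> {-1, 0, 1} \<and> plane ` cell L a b c d = plane ` cell L a' b' c' d'"
    using assms(1) by blast
  then show ?thesis
    using assms(2) unfolding canonical_complex_net mem_Collect_eq by (intro conjI) auto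
qed

lemma canonical_complex_netE:
  assumes "C \<in> canonical_complex arch (net L)"
  obtains a b c d where "C = plane ` cell L a b c d" "C \<noteq> {}"
  using assms unfolding canonical_complex_net by blast

section \<open>Full-dimensional cells and their sign sequences\<close>

lemma sign_seq_plane_image:
  assumes "interior S \<noteq> {}"
  obtains z where "z \<in> interior S" "sign_seq arch (net L) (plane ` S) = sign_pattern L z"
proof -
  have relint: "rel_interior (plane ` S) = plane ` interior S"
    using rel_interior_plane_image rel_interior_nonempty_interior [OF assms] by simp
  then have "(SOME x. x \<in> rel_interior (plane ` S)) \<in> rel_interior (plane ` S)"
    using assms by (simp add: some_in_eq)
  then have "(SOME x. x \<in> rel_interior (plane ` S)) \<in> plane ` interior S"
    unfolding relint .
  then obtain z where "z \<in> interior S" "(SOME x. x \<in> rel_interior (plane ` S)) = plane z"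
    by blast
  then show ?thesis
    using that by (simp add: sign_seq_net)
qed

lemma sign_pattern_eq:
  assumes "z \<in> cell L a b c d" "w \<in> cell L a b c d" "generic L z" "generic L w"
  shows "sign_pattern L z = sign_pattern L w"
proof -
  have "sign_cond a (fst z)" "sign_cond a (fst w)" "sign_cond b (snd z)" "sign_cond b (snd w)"
    "sign_cond d (hidden L z)" "sign_cond d (hidden L w)"
    using assms(1,2) by (simp_all add: cell_def)
  then have "sgn (fst z) = sgn (fst w)" "sgn (snd z) = sgn (snd w)" "sgn (hidden L z) = sgn (hidden L w)"
    using assms(3,4) unfolding generic_def by (metis sign_cond_sgn_eq)+
  then show ?thesis
    by (simp add: sign_pattern_def)
qed

lemma full_dim_sign_seqs:
  assumes "sign_change_at_zeros L"
  shows "{sign_seq arch (net L) C | C. C \<in> canonical_complex arch (net L) \<and> cell_dim C = arch ! 0} =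
    sign_pattern L ` Collect (generic L)"
proof (intro equalityI subsetI)
  fix s assume "s \<in> {sign_seq arch (net L) C | C. C \<in> canonical_complex arch (net L) \<and> cell_dim C = arch ! 0}"
  then obtain C where C: "C \<in> canonical_complex arch (net L)" "cell_dim C = 2" "s = sign_seq arch (net L) C"
    by auto
  obtain a b c d where "C = plane ` cell L a b c d"
    using C(1) by (rule canonical_complex_netE)
  with C have "cell_dim (plane ` cell L a b c d) = 2" and s: "s = sign_seq arch (net L) (plane ` cell L a b c d)"
    by simp_all
  then have "interior (cell L a b c d) \<noteq> {}"
    using cell_dim_plane_image_eq_2_iff [OF convex_cell] by blast
  then obtain z where "z \<in> interior (cell L a b c d)" "s = sign_pattern L z"
    unfolding s by (rule sign_seq_plane_image)
  then show "s \<in> sign_pattern L ` Collect (generic L)"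
    using interior_cell_generic [OF assms] by blast
next
  fix s assume "s \<in> sign_pattern L ` Collect (generic L)"
  then obtain z where z: "generic L z" "s = sign_pattern L z"
    by blast
  obtain a b c d where abcd: "{a, b, c, d} \<subseteq> {-1, 0, 1}" "z \<in> interior (cell L a b c d)"
    using z(1) by (rule generic_in_interior_cell)
  then have "interior (cell L a b c d) \<noteq> {}"
    by blast
  then obtain w where w: "w \<in> interior (cell L a b c d)"
    "sign_seq arch (net L) (plane ` cell L a b c d) = sign_pattern L w"
    by (rule sign_seq_plane_image)
  have "w \<in> cell L a b c d" "z \<in> cell L a b c d"
    using w(1) abcd(2) interior_subset by blast+
  then have "sign_pattern L w = s"
    using sign_pattern_eq interior_cell_generic [OF assms w(1)] z by metis
  moreover have "plane ` cell L a b c d \<in> canonical_complex arch (net L)"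
    using abcd interior_subset by (intro plane_image_cell_in_canonical_complex) auto
  moreover have "cell_dim (plane ` cell L a b c d) = arch ! 0"
    using cell_dim_plane_image_eq_2_iff [OF convex_cell] abcd(2) by auto
  ultimately show "s \<in> {sign_seq arch (net L) C | C. C \<in> canonical_complex arch (net L) \<and> cell_dim C = arch ! 0}"
    using w(2) by (intro CollectI exI [of _ "plane ` cell L a b c d"]) simp
qed

section \<open>Equal activation patterns, different face posets\<close>

definition layer_shifted :: layer where
  "layer_shifted = (\<lambda>j k. if k = 0 then 1 else 0, \<lambda>j. -1)"

definition layer_conic :: layer where
  "layer_conic = (\<lambda>j k. if k = 0 then 1 else -1, \<lambda>j. 0)"

lemma hidden_shifted: "hidden layer_shifted z = max 0 (fst z) - 1"
  by (simp add: hidden_def layer_shifted_def)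

lemma hidden_conic: "hidden layer_conic z = max 0 (fst z) - \<bar>snd z\<bar>"
  by (simp add: hidden_def layer_conic_def max_def)

lemma sign_change_at_zeros_shifted: "sign_change_at_zeros layer_shifted"
  by (auto simp: sign_change_at_zeros_def hidden_shifted max_def)

lemma sign_change_at_zeros_conic: "sign_change_at_zeros layer_conic"
  by (auto simp: sign_change_at_zeros_def hidden_conic max_def)

lemma sign_patterns_shifted_conic:
  "sign_pattern layer_shifted ` Collect (generic layer_shifted) =
   sign_pattern layer_conic ` Collect (generic layer_conic)"
proof -
  define rescale where "rescale z = (\<bar>snd z\<bar> * fst z, snd z)" for z :: "real \<times> real"
  have rescale: "fst (rescale z) = \<bar>snd z\<bar> * fst z" "snd (rescale z) = snd z" for z
    by (simp_all add: rescale_def)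
  have hidden: "hidden layer_conic (rescale z) = \<bar>snd z\<bar> * hidden layer_shifted z" for z
    by (simp add: rescale hidden_conic hidden_shifted max_mult_distrib_left right_diff_distrib)
  have generic: "generic layer_conic (rescale z) \<longleftrightarrow> generic layer_shifted z" for z
    by (auto simp: generic_def hidden rescale)
  have pattern: "sign_pattern layer_conic (rescale z) = sign_pattern layer_shifted z" if "snd z \<noteq> 0" for z
    using that by (simp add: sign_pattern_def hidden rescale sgn_mult)
  have unscale: "rescale (fst z / \<bar>snd z\<bar>, snd z) = z" if "snd z \<noteq> 0" for z
    using that by (simp add: rescale_def)
  show ?thesis
  proof (intro equalityI image_subsetI)
    fix z assume "z \<in> Collect (generic layer_shifted)"
    then have "snd z \<noteq> 0" "rescale z \<in> Collect (generic layer_conic)"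
      using generic [of z] by (simp_all add: generic_def [of layer_shifted])
    then show "sign_pattern layer_shifted z \<in> sign_pattern layer_conic ` Collect (generic layer_conic)"
      using pattern [of z] by (intro image_eqI [where x = "rescale z"]) simp_all
  next
    fix z assume "z \<in> Collect (generic layer_conic)"
    moreover define z' where "z' = (fst z / \<bar>snd z\<bar>, snd z)"
    ultimately have "snd z' \<noteq> 0" "rescale z' = z"
      using unscale by (simp_all add: z'_def generic_def)
    then have "z' \<in> Collect (generic layer_shifted)" "sign_pattern layer_conic z = sign_pattern layer_shifted z'"
      using \<open>z \<in> Collect (generic layer_conic)\<close> generic [of z'] pattern [of z'] by simp_all
    then show "sign_pattern layer_conic z \<in> sign_pattern layer_shifted ` Collect (generic layer_shifted)"
      by blast
  qed
qed

definition has_least_face :: "'a::real_vector set set \<Rightarrow> bool" where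
  "has_least_face P \<longleftrightarrow> (\<exists>C \<in> P. \<forall>D \<in> P. C face_of D)"

lemma comb_equiv_has_least_face:
  assumes "comb_equiv P Q" "has_least_face Q"
  shows "has_least_face P"
proof -
  obtain f where f: "bij_betw f P Q" "\<And>C D. C \<in> P \<Longrightarrow> D \<in> P \<Longrightarrow> C face_of D \<longleftrightarrow> f C face_of f D"
    using assms(1) unfolding comb_equiv_def by blast
  obtain C' where C': "C' \<in> Q" "\<And>D'. D' \<in> Q \<Longrightarrow> C' face_of D'"
    using assms(2) unfolding has_least_face_def by blast
  then obtain C where C: "C \<in> P" "f C = C'"
    using f(1) unfolding bij_betw_def by blast
  have "C face_of D" if "D \<in> P" for D
    using f(2) [OF C(1) that] C'(2) [OF bij_betw_apply [OF f(1) that]] C(2) by simp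
  then have "\<forall>D \<in> P. C face_of D"
    by blast
  then show ?thesis
    unfolding has_least_face_def using C(1) by blast
qed

lemma convex_combination_eq_0_same_sign:
  fixes p q u :: real
  assumes "0 < u" "u < 1" "0 \<le> p * q" "(1 - u) * p + u * q = 0"
  shows "p = 0 \<and> q = 0"
proof -
  have "0 < 1 - u"
    using assms(2) by simp
  consider "0 \<le> p" "0 \<le> q" | "p \<le> 0" "q \<le> 0"
    using assms(3) by (auto simp: zero_le_mult_iff)
  then show ?thesis
  proof cases
    case 1
    then have "0 \<le> (1 - u) * p" "0 \<le> u * q"
      using assms(1) \<open>0 < 1 - u\<close> by simp_all
    then have "(1 - u) * p = 0" "u * q = 0"
      using assms(4) by linarith+
    then show ?thesis
      using assms(1) \<open>0 < 1 - u\<close> by simp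
  next
    case 2
    then have "(1 - u) * p \<le> 0" "u * q \<le> 0"
      using assms(1) \<open>0 < 1 - u\<close> by (simp_all add: mult_nonneg_nonpos)
    then have "(1 - u) * p = 0" "u * q = 0"
      using assms(4) by linarith+
    then show ?thesis
      using assms(1) \<open>0 < 1 - u\<close> by simp
  qed
qed

lemma zero_face_of_orthant:
  fixes S :: "('a \<Rightarrow> real) set"
  assumes "0 \<in> S" and same_signs: "\<And>p q i. p \<in> S \<Longrightarrow> q \<in> S \<Longrightarrow> 0 \<le> p i * q i"
  shows "{0} face_of S"
  unfolding face_of_singleton extreme_point_of_def
proof (intro conjI ballI notI)
  show "0 \<in> S" by (fact assms(1))
next
  fix p q assume pq: "p \<in> S" "q \<in> S" "0 \<in> open_segment p q"
  then obtain u where u: "0 < u" "u < 1" "0 = (1 - u) *\<^sub>R p + u *\<^sub>R q" "p \<noteq> q"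
    by (auto simp: in_segment)
  have "p i = 0 \<and> q i = 0" for i
  proof -
    have "0 \<le> p i * q i"
      using same_signs pq(1,2) by blast
    moreover have "(1 - u) * p i + u * q i = 0"
      using fun_cong [OF u(3), of i] by (simp add: scaleR_fun_def)
    ultimately show ?thesis
      by (rule convex_combination_eq_0_same_sign [OF u(1,2)])
  qed
  then show False
    using u(4) by (auto simp: fun_eq_iff)
qed

lemma plane_zero: "plane (0, 0) = 0"
  by (simp add: plane_def fun_eq_iff)

lemma has_least_face_conic: "has_least_face (canonical_complex arch (net layer_conic))"
  unfolding has_least_face_def
proof
  have "cell layer_conic 0 0 0 0 = {(0, 0)}"
    by (auto simp: cell_def sign_cond_def hidden_conic)
  then show "{0} \<in> canonical_complex arch (net layer_conic)"
    using plane_image_cell_in_canonical_complex [of 0 0 0 0 layer_conic] by (simp add: plane_zero)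
  show "\<forall>D \<in> canonical_complex arch (net layer_conic). {0} face_of D"
  proof
    fix D assume "D \<in> canonical_complex arch (net layer_conic)"
    then obtain a b c d where D: "D = plane ` cell layer_conic a b c d"
      by (rule canonical_complex_netE)
    show "{0} face_of D"
    proof (rule zero_face_of_orthant)
      show "0 \<in> D"
        unfolding D plane_zero [symmetric] by (intro imageI) (simp add: cell_def hidden_conic)
      fix p q i assume "p \<in> D" "q \<in> D"
      then obtain z w where "p = plane z" "q = plane w" "z \<in> cell layer_conic a b c d" "w \<in> cell layer_conic a b c d"
        unfolding D by blast
      then show "0 \<le> p i * q i"
        by (auto simp: plane_def cell_def intro: sign_cond_mult_nonneg)
    qed
  qed
qed

lemma not_has_least_face_shifted: "\<not> has_least_face (canonical_complex arch (net layer_shifted))"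
proof
  have "cell layer_shifted 0 0 0 (-1) = {(0, 0)}" "cell layer_shifted 1 0 0 0 = {(1, 0)}"
    by (auto simp: cell_def sign_cond_def hidden_shifted max_def)
  then have vertices: "{plane (0, 0)} \<in> canonical_complex arch (net layer_shifted)"
    "{plane (1, 0)} \<in> canonical_complex arch (net layer_shifted)"
    using plane_image_cell_in_canonical_complex [of 0 0 0 "-1" layer_shifted]
      plane_image_cell_in_canonical_complex [of 1 0 0 0 layer_shifted] by simp_all
  assume "has_least_face (canonical_complex arch (net layer_shifted))"
  then obtain C where C: "C \<in> canonical_complex arch (net layer_shifted)"
    "C face_of {plane (0, 0)}" "C face_of {plane (1, 0)}"
    unfolding has_least_face_def using vertices by blast
  have "C \<noteq> {}"
    using C(1) by (rule canonical_complex_netE)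
  moreover have "C \<subseteq> {plane (0, 0)} \<inter> {plane (1, 0)}"
    using C(2,3) face_of_imp_subset by blast
  moreover have "plane (0, 0) \<noteq> plane (1, 0)"
    using plane_apply(1) [of "(0, 0)"] plane_apply(1) [of "(1, 0)"] by force
  ultimately show False
    by blast
qed

theorem theorem15:
  shows "\<exists>ns Ls ns' Ls'. wf_net ns Ls \<and> wf_net ns' Ls' \<and>
     ns ! 0 = ns' ! 0 \<and> sum_list (tl ns) = sum_list (tl ns') \<and>
     {sign_seq ns Ls C | C. C \<in> canonical_complex ns Ls \<and> cell_dim C = ns ! 0} =
     {sign_seq ns' Ls' C' | C'. C' \<in> canonical_complex ns' Ls' \<and> cell_dim C' = ns' ! 0} \<and>
     \<not> comb_equiv (canonical_complex ns Ls) (canonical_complex ns' Ls')"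
proof -
  have signs:
    "{sign_seq arch (net layer_shifted) C | C.
        C \<in> canonical_complex arch (net layer_shifted) \<and> cell_dim C = arch ! 0} =
     {sign_seq arch (net layer_conic) C | C.
        C \<in> canonical_complex arch (net layer_conic) \<and> cell_dim C = arch ! 0}"
    unfolding full_dim_sign_seqs [OF sign_change_at_zeros_shifted]
      full_dim_sign_seqs [OF sign_change_at_zeros_conic]
    by (rule sign_patterns_shifted_conic)
  have "\<not> comb_equiv (canonical_complex arch (net layer_shifted)) (canonical_complex arch (net layer_conic))"
    using comb_equiv_has_least_face has_least_face_conic not_has_least_face_shifted by blast
  with signs show ?thesis
    by - (rule exI [of _ arch], rule exI [of _ "net layer_shifted"], rule exI [of _ arch],
        rule exI [of _ "net layer_conic"], simp add: wf_net_arch)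
qed

end
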